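(* Let $n\ge 1$ and $\tau\in\mathfrak S_n$, and write $\tau=\tau^a\,n\,\tau^b$ where $\tau^a$ and $\tau^b$ are the (possibly empty) factors before and after the entry $n$. Then $\tau\in\mathrm{Sort}_n(\mathrm{SC}_{\underline{12}3})$ if and only if all of the following hold: (1) every entry of $\tau^a$ is greater than every entry of $\tau^b$; (2) $\tau^a$ avoids the vincular pattern $3\underline{21}$ and the classical pattern $132$; (3) $\tau^b$ avoids the classical pattern $213$.
   Context: $\mathfrak S_n$ is the set of permutations of $\{1,\dots,n\}$. A vincular pattern is a permutation with some entries underlined; a sequence contains it if it has a subsequence with the same relative order in which entries corresponding to adjacent underlined entries occupy consecutive positions; classical patterns have no underlining. An occurrence of $\underline{12}3$ is $a_j a_{j+1} a_l$ with $l>j+1$ and $a_j<a_{j+1}<a_l$; an occurrence of $3\underline{21}$ is $a_i a_j a_{j+1}$ with $i<j$ and $a_{j+1}<a_j<a_i$. For a pattern $\sigma$, the map $\mathrm{SC}_\sigma$ acts on $\tau$: read entries left to right; when the next entry $x$ is read, if pushing $x$ yields a stack whose entries read top to bottom (stack adjacency = consecutive positions) avoid $\sigma$, push $x$; otherwise pop the top stack entry to the output and repeat. At the end pop all remaining entries; the output is $\mathrm{SC}_\sigma(\tau)$. West's stack-sorting map is $s=\mathrm{SC}_{21}$. $\mathrm{Sort}_n(\mathrm{SC}_\sigma)=\{\tau\in\mathfrak S_n : s(\mathrm{SC}_\sigma(\tau))=12\cdots n\}$. *)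

theory Defs
  imports Main
begin

definition perms :: "nat \<Rightarrow> nat list set" where
  "perms n = {w. distinct w \<and> set w = {1..n}}"

text \<open>The pattern is a permutation sigma (list of
  its entries) together with a set A of 0-based positions i meaning that pattern
  entries i and i+1 are underlined together (must occupy consecutive positions). Classical patterns have A = {}.\<close>
definition contains_vinc :: "nat list \<Rightarrow> nat set \<Rightarrow> 'a::linorder list \<Rightarrow> bool" where
  "contains_vinc sigma A w \<longleftrightarrow>
     (\<exists>idx :: nat list. length idx = length sigma \<and> sorted_wrt (<) idx \<and>
        (\<forall>p\<in>set idx. p < length w) \<and>
        (\<forall>i j. i < length sigma \<longrightarrow> j < length sigma \<longrightarrow>
             (w ! (idx ! i) < w ! (idx ! j) \<longleftrightarrow> sigma ! i < sigma ! j)) \<and>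
        (\<forall>i\<in>A. Suc i < length sigma \<longrightarrow> idx ! Suc i = Suc (idx ! i)))"

definition avoids_vinc :: "nat list \<Rightarrow> nat set \<Rightarrow> 'a::linorder list \<Rightarrow> bool" where
  "avoids_vinc sigma A w \<longleftrightarrow> \<not> contains_vinc sigma A w"

text \<open>Arguments: the avoidance test, remaining
  input, stack (head = top of stack), output so far. The stack word read top to
  bottom is the stack list itself. If pushing x is forbidden but the stack is
  empty, x is pushed anyway (this case never arises for patterns of length
  at least 2, which are the only ones used here).\<close>
function sc_run :: "('a list \<Rightarrow> bool) \<Rightarrow> 'a list \<Rightarrow> 'a list \<Rightarrow> 'a list \<Rightarrow> 'a list" where
  "sc_run ok [] st out = out @ st"
| "sc_run ok (x # xs) st out =
     (if ok (x # st) then sc_run ok xs (x # st) out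
      else (case st of [] \<Rightarrow> sc_run ok xs [x] out
                     | y # ys \<Rightarrow> sc_run ok (x # xs) ys (out @ [y])))"
  by pat_completeness auto
termination
  by (relation "measure (\<lambda>(_, inp, st, _). 2 * length inp + length st)") auto

definition SC :: "nat list \<Rightarrow> nat set \<Rightarrow> 'a::linorder list \<Rightarrow> 'a list" where
  "SC sigma A tau = sc_run (avoids_vinc sigma A) tau [] []"

definition west_s :: "'a::linorder list \<Rightarrow> 'a list" where
  "west_s tau = SC [2, 1] {} tau"

definition Sort :: "nat \<Rightarrow> nat list \<Rightarrow> nat set \<Rightarrow> nat list set" where
  "Sort n sigma A = {tau \<in> perms n. west_s (SC sigma A tau) = [1..<n+1]}"

end

theory Submission
  imports Defs "HOL-Library.Multiset"
begin
(*
  Reading tau^a, the machine SC_12_3 pops only when its stack, which is the reversed prefix read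
  so far, contains 12_3, i.e. when that prefix contains 3_21; and every popped entry exceeds
  some entry that stays in the stack. The maximum n is then pushed, and above n a stack avoids
  12_3 exactly when it avoids 12, so tau^b is processed by SC_12 without touching the entries
  below n. Thus SC_12_3(tau) = out . SC_12(tau^b) . n . st, where out = [] and st = rev tau^a
  if tau^a avoids 3_21. By West, s sorts a permutation iff it avoids 231, and splitting the
  231-occurrences of this word at its maximum n gives the three conditions: a 231 in rev tau^a
  is a 132 in tau^a, SC_12(tau^b) contains 231 iff tau^b contains 213, and the occurrences
  through n are the pairs a < b with a in tau^a and b in tau^b.
*)

section \<open>Pattern occurrences\<close>

fun has_pair :: "('a \<Rightarrow> 'a \<Rightarrow> bool) \<Rightarrow> 'a list \<Rightarrow> bool" where
  "has_pair Q [] = False"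
| "has_pair Q (x # w) = ((\<exists>y\<in>set w. Q x y) \<or> has_pair Q w)"

fun has_triple :: "('a \<Rightarrow> 'a \<Rightarrow> 'a \<Rightarrow> bool) \<Rightarrow> 'a list \<Rightarrow> bool" where
  "has_triple P [] = False"
| "has_triple P (x # w) = (has_pair (P x) w \<or> has_triple P w)"

lemma has_pair_iff_not_sorted_wrt: "has_pair Q w \<longleftrightarrow> \<not> sorted_wrt (\<lambda>x y. \<not> Q x y) w"
  by (induction w) auto

lemma has_pair_append:
  "has_pair Q (u @ v) \<longleftrightarrow> has_pair Q u \<or> has_pair Q v \<or> (\<exists>x\<in>set u. \<exists>y\<in>set v. Q x y)"
  by (auto simp: has_pair_iff_not_sorted_wrt sorted_wrt_append)

lemma has_pair_rev: "has_pair Q (rev w) \<longleftrightarrow> has_pair (\<lambda>x y. Q y x) w"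
  by (simp add: has_pair_iff_not_sorted_wrt sorted_wrt_rev)

lemma has_pair_iff_nth: "has_pair Q w \<longleftrightarrow> (\<exists>i j. i < j \<and> j < length w \<and> Q (w ! i) (w ! j))"
  by (auto simp: has_pair_iff_not_sorted_wrt sorted_wrt_iff_nth_less)

lemma has_pair_mono:
  "has_pair Q w \<Longrightarrow> (\<And>x y. x \<in> set w \<Longrightarrow> y \<in> set w \<Longrightarrow> Q x y \<Longrightarrow> Q' x y) \<Longrightarrow> has_pair Q' w"
  by (induction w) auto

lemma has_pairE:
  assumes "has_pair Q w" obtains x y where "x \<in> set w" "y \<in> set w" "Q x y"
  using assms by (induction w) auto

lemma has_triple_append:
  "has_triple P (u @ v) \<longleftrightarrow> has_triple P u \<or> has_triple P v \<or> (\<exists>x\<in>set u. has_pair (P x) v)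
     \<or> has_pair (\<lambda>x y. \<exists>z\<in>set v. P x y z) u"
  by (induction u) (auto simp: has_pair_append)

lemma has_triple_rev: "has_triple P (rev w) \<longleftrightarrow> has_triple (\<lambda>x y z. P z y x) w"
  by (induction w) (auto simp: has_triple_append has_pair_rev)

lemma has_triple_has_pair: "has_triple P w \<Longrightarrow> (\<And>x y z. P x y z \<Longrightarrow> Q x y) \<Longrightarrow> has_pair Q w"
  by (induction w) (auto, meson has_pairE)

lemma has_triple_iff_nth:
  "has_triple P w \<longleftrightarrow> (\<exists>i j k. i < j \<and> j < k \<and> k < length w \<and> P (w ! i) (w ! j) (w ! k))"
proof (induction w)
  case (Cons x w)
  have "(\<exists>i j k. i < j \<and> j < k \<and> k < length (x # w) \<and> P ((x # w) ! i) ((x # w) ! j) ((x # w) ! k))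
    \<longleftrightarrow> (\<exists>j k. j < k \<and> k < length w \<and> P x (w ! j) (w ! k))
       \<or> (\<exists>i j k. i < j \<and> j < k \<and> k < length w \<and> P (w ! i) (w ! j) (w ! k))"
    (is "?L \<longleftrightarrow> ?R")
  proof
    assume ?L
    then obtain i j k where ijk: "i < j" "j < k" "k < Suc (length w)"
      and P: "P ((x # w) ! i) ((x # w) ! j) ((x # w) ! k)"
      by auto
    obtain j' k' where jk: "j = Suc j'" "k = Suc k'"
      using ijk by (metis less_imp_Suc_add)
    show ?R
    proof (cases i)
      case 0
      then show ?thesis using ijk P jk by auto
    next
      case (Suc i')
      then show ?thesis using ijk P jk by auto
    qed
  next
    assume ?R
    then show ?L
      by (metis less_Suc_eq_0_disj nth_Cons_0 nth_Cons_Suc length_Cons zero_less_Suc)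
  qed
  then show ?case
    using Cons.IH by (simp add: has_pair_iff_nth)
qed simp

abbreviation has_231 :: "'a::linorder list \<Rightarrow> bool" where
  "has_231 \<equiv> has_triple (\<lambda>x y z. z < x \<and> x < y)"

abbreviation has_213 :: "'a::linorder list \<Rightarrow> bool" where
  "has_213 \<equiv> has_triple (\<lambda>x y z. y < x \<and> x < z)"

abbreviation has_132 :: "'a::linorder list \<Rightarrow> bool" where
  "has_132 \<equiv> has_triple (\<lambda>x y z. x < z \<and> z < y)"

lemma has_231_split_Max:
  assumes "\<forall>x\<in>set L \<union> set R. x < m"
  shows "has_231 (L @ m # R) \<longleftrightarrow> has_231 L \<or> has_231 R \<or> (\<exists>x\<in>set L. \<exists>z\<in>set R. z < x)"
  using assms by (auto simp: has_triple_append elim!: has_pairE) (blast dest: less_asym)+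

lemma has_213_split_Min:
  assumes "\<forall>x\<in>set L \<union> set R. m < x"
  shows "has_213 (L @ m # R) \<longleftrightarrow> has_213 L \<or> has_213 R \<or> (\<exists>x\<in>set L. \<exists>z\<in>set R. x < z)"
  using assms by (auto simp: has_triple_append elim!: has_pairE) (blast dest: less_asym)+

lemma has_231_snoc_Min:
  assumes "\<forall>x\<in>set V. m < x"
  shows "has_231 (V @ [m]) \<longleftrightarrow> has_pair (<) V"
proof -
  have "has_231 (V @ [m]) \<longleftrightarrow> has_231 V \<or> has_pair (\<lambda>x y. m < x \<and> x < y) V"
    by (simp add: has_triple_append)
  also have "\<dots> \<longleftrightarrow> has_pair (<) V"
  proof
    assume "has_231 V \<or> has_pair (\<lambda>x y. m < x \<and> x < y) V"
    then show "has_pair (<) V"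
      by (auto elim: has_triple_has_pair has_pair_mono)
  next
    assume "has_pair (<) V"
    then have "has_pair (\<lambda>x y. m < x \<and> x < y) V"
      by (rule has_pair_mono) (use assms in simp)
    then show "has_231 V \<or> has_pair (\<lambda>x y. m < x \<and> x < y) V" ..
  qed
  finally show ?thesis .
qed

text \<open>In the names \<open>has_12_3\<close> and \<open>has_3_21\<close> of the vincular patterns, the two entries
  written together must be adjacent; the underscore separates the free one.\<close>

definition has_12_3 :: "'a::linorder list \<Rightarrow> bool" where
  "has_12_3 w \<longleftrightarrow> (\<exists>i k. Suc i < k \<and> k < length w \<and> w ! i < w ! Suc i \<and> w ! Suc i < w ! k)"

definition has_3_21 :: "'a::linorder list \<Rightarrow> bool" where
  "has_3_21 w \<longleftrightarrow> (\<exists>i j. i < j \<and> Suc j < length w \<and> w ! Suc j < w ! j \<and> w ! j < w ! i)"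

lemma has_12_3_Nil [simp]: "\<not> has_12_3 []"
  and has_12_3_singleton [simp]: "\<not> has_12_3 [x]"
  by (auto simp: has_12_3_def)

lemma has_12_3_Cons_Cons:
  "has_12_3 (x # y # v) \<longleftrightarrow> (x < y \<and> (\<exists>z\<in>set v. y < z)) \<or> has_12_3 (y # v)"
proof
  assume "has_12_3 (x # y # v)"
  then obtain i k where H: "Suc i < k" "k < length (x # y # v)"
    "(x # y # v) ! i < (x # y # v) ! Suc i" "(x # y # v) ! Suc i < (x # y # v) ! k"
    unfolding has_12_3_def by blast
  have "k = Suc (Suc (k - 2))"
    using H(1) by linarith
  then obtain k' where k: "k = Suc (Suc k')" by blast
  show "(x < y \<and> (\<exists>z\<in>set v. y < z)) \<or> has_12_3 (y # v)"
  proof (cases i)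
    case 0
    then have "x < y" "v ! k' \<in> set v" "y < v ! k'"
      using H k by auto
    then show ?thesis by blast
  next
    case (Suc i')
    then have "has_12_3 (y # v)"
      unfolding has_12_3_def using H k by (intro exI[of _ i'] exI[of _ "Suc k'"]) auto
    then show ?thesis ..
  qed
next
  assume "(x < y \<and> (\<exists>z\<in>set v. y < z)) \<or> has_12_3 (y # v)"
  then show "has_12_3 (x # y # v)"
  proof
    assume "x < y \<and> (\<exists>z\<in>set v. y < z)"
    then obtain k where "x < y" "k < length v" "y < v ! k"
      by (auto simp: in_set_conv_nth)
    then show ?thesis
      unfolding has_12_3_def by (intro exI[of _ 0] exI[of _ "Suc (Suc k)"]) auto
  next
    assume "has_12_3 (y # v)"
    then obtain i k where "Suc i < k" "k < length (y # v)"
      "(y # v) ! i < (y # v) ! Suc i" "(y # v) ! Suc i < (y # v) ! k"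
      unfolding has_12_3_def by blast
    then show ?thesis
      unfolding has_12_3_def by (intro exI[of _ "Suc i"] exI[of _ "Suc k"]) auto
  qed
qed

lemma has_12_3_append_left: "has_12_3 w \<Longrightarrow> has_12_3 (v @ w)"
proof (induction v)
  case (Cons x v)
  then show ?case by (cases "v @ w") (auto simp: has_12_3_Cons_Cons)
qed simp

lemma has_12_3_Cons_Max: "\<forall>z\<in>set w. z < n \<Longrightarrow> has_12_3 (n # w) \<longleftrightarrow> has_12_3 w"
  by (cases w) (auto simp: has_12_3_Cons_Cons dest: order.asym)

lemma has_12_3_rev: "has_12_3 (rev w) \<longleftrightarrow> has_3_21 w"
proof
  assume "has_12_3 (rev w)"
  then obtain i k where H: "Suc i < k" "k < length w"
    "rev w ! i < rev w ! Suc i" "rev w ! Suc i < rev w ! k"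
    unfolding has_12_3_def by auto
  have "rev w ! i = w ! Suc (length w - Suc (Suc i))" "rev w ! Suc i = w ! (length w - Suc (Suc i))"
    "rev w ! k = w ! (length w - Suc k)"
    using H by (auto simp: rev_nth Suc_diff_Suc)
  then show "has_3_21 w"
    unfolding has_3_21_def using H
    by (intro exI[of _ "length w - Suc k"] exI[of _ "length w - Suc (Suc i)"]) auto
next
  assume "has_3_21 w"
  then obtain i j where H: "i < j" "Suc j < length w" "w ! Suc j < w ! j" "w ! j < w ! i"
    unfolding has_3_21_def by blast
  have "rev w ! (length w - Suc (Suc j)) = w ! Suc j" "rev w ! Suc (length w - Suc (Suc j)) = w ! j"
    "rev w ! (length w - Suc i) = w ! i"
    using H by (auto simp: rev_nth Suc_diff_Suc)
  then show "has_12_3 (rev w)"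
    unfolding has_12_3_def using H
    by (intro exI[of _ "length w - Suc (Suc j)"] exI[of _ "length w - Suc i"]) auto
qed

lemma contains_vinc_length_3:
  "contains_vinc [a, b, c] A (w :: 'a::linorder list) \<longleftrightarrow>
   (\<exists>i j k. i < j \<and> j < k \<and> k < length w \<and>
     (w ! i < w ! j \<longleftrightarrow> a < b) \<and> (w ! j < w ! i \<longleftrightarrow> b < a) \<and>
     (w ! i < w ! k \<longleftrightarrow> a < c) \<and> (w ! k < w ! i \<longleftrightarrow> c < a) \<and>
     (w ! j < w ! k \<longleftrightarrow> b < c) \<and> (w ! k < w ! j \<longleftrightarrow> c < b) \<and>
     (0 \<in> A \<longrightarrow> j = Suc i) \<and> (1 \<in> A \<longrightarrow> k = Suc j))"
  (is "?L \<longleftrightarrow> ?R")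
proof
  assume ?L
  then obtain idx where len: "length idx = 3" and sorted: "sorted_wrt (<) idx"
    and bound: "\<forall>p\<in>set idx. p < length w"
    and iso: "\<And>p q. p < 3 \<Longrightarrow> q < 3 \<Longrightarrow> (w ! (idx ! p) < w ! (idx ! q) \<longleftrightarrow> [a, b, c] ! p < [a, b, c] ! q)"
    and adj: "\<And>p. p \<in> A \<Longrightarrow> Suc p < 3 \<Longrightarrow> idx ! Suc p = Suc (idx ! p)"
    unfolding contains_vinc_def by (auto simp: numeral_3_eq_3)
  from len obtain i j k where "idx = [i, j, k]"
    by (auto simp: numeral_3_eq_3 length_Suc_conv)
  then show ?R
    using sorted bound iso[of 0 1] iso[of 1 0] iso[of 0 2] iso[of 2 0] iso[of 1 2] iso[of 2 1]
      adj[of 0] adj[of 1]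
    by auto
next
  assume ?R
  then obtain i j k where "i < j" "j < k" "k < length w"
    "(w ! i < w ! j \<longleftrightarrow> a < b)" "(w ! j < w ! i \<longleftrightarrow> b < a)"
    "(w ! i < w ! k \<longleftrightarrow> a < c)" "(w ! k < w ! i \<longleftrightarrow> c < a)"
    "(w ! j < w ! k \<longleftrightarrow> b < c)" "(w ! k < w ! j \<longleftrightarrow> c < b)"
    "0 \<in> A \<longrightarrow> j = Suc i" "1 \<in> A \<longrightarrow> k = Suc j"
    by blast
  then show ?L
    unfolding contains_vinc_def
    by (intro exI[of _ "[i, j, k]"]) (auto simp: numeral_3_eq_3 less_Suc_eq)
qed

lemma contains_vinc_length_2:
  "contains_vinc [a, b] {} (w :: 'a::linorder list) \<longleftrightarrow>
   (\<exists>i j. i < j \<and> j < length w \<and> (w ! i < w ! j \<longleftrightarrow> a < b) \<and> (w ! j < w ! i \<longleftrightarrow> b < a))"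
  (is "?L \<longleftrightarrow> ?R")
proof
  assume ?L
  then obtain idx where len: "length idx = 2" and sorted: "sorted_wrt (<) idx"
    and bound: "\<forall>p\<in>set idx. p < length w"
    and iso: "\<And>p q. p < 2 \<Longrightarrow> q < 2 \<Longrightarrow> (w ! (idx ! p) < w ! (idx ! q) \<longleftrightarrow> [a, b] ! p < [a, b] ! q)"
    unfolding contains_vinc_def by (auto simp: numeral_2_eq_2)
  from len obtain i j where "idx = [i, j]"
    by (auto simp: numeral_2_eq_2 length_Suc_conv)
  then show ?R
    using sorted bound iso[of 0 1] iso[of 1 0] by auto
next
  assume ?R
  then obtain i j where "i < j" "j < length w"
    "(w ! i < w ! j \<longleftrightarrow> a < b)" "(w ! j < w ! i \<longleftrightarrow> b < a)"
    by blast
  then show ?L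
    unfolding contains_vinc_def
    by (intro exI[of _ "[i, j]"]) (auto simp: numeral_2_eq_2 less_Suc_eq)
qed

lemma avoids_vinc_12: "avoids_vinc [1, 2] {} = (\<lambda>w. \<not> has_pair (<) w)"
  by (simp add: fun_eq_iff avoids_vinc_def contains_vinc_length_2 has_pair_iff_nth)
    (blast dest: less_asym)

lemma avoids_vinc_21: "avoids_vinc [2, 1] {} = (\<lambda>w. \<not> has_pair (>) w)"
  by (simp add: fun_eq_iff avoids_vinc_def contains_vinc_length_2 has_pair_iff_nth)
    (blast dest: less_asym)

lemma avoids_vinc_132: "avoids_vinc [1, 3, 2] {} w \<longleftrightarrow> \<not> has_132 w"
  unfolding avoids_vinc_def contains_vinc_length_3 has_triple_iff_nth
  by (intro arg_cong[where f=Not] ex_cong1) auto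

lemma avoids_vinc_213: "avoids_vinc [2, 1, 3] {} w \<longleftrightarrow> \<not> has_213 w"
  unfolding avoids_vinc_def contains_vinc_length_3 has_triple_iff_nth
  by (intro arg_cong[where f=Not] ex_cong1) auto

lemma avoids_vinc_12_3: "avoids_vinc [1, 2, 3] {0} = (\<lambda>w. \<not> has_12_3 w)"
  unfolding fun_eq_iff avoids_vinc_def contains_vinc_length_3 has_12_3_def
  by (auto 0 4 intro: exI[of _ "Suc _"])

lemma avoids_vinc_3_21: "avoids_vinc [3, 2, 1] {1} w \<longleftrightarrow> \<not> has_3_21 w"
  unfolding avoids_vinc_def contains_vinc_length_3 has_3_21_def
  by (auto 0 4 intro: exI[of _ "Suc _"] dest: less_trans)

section \<open>The pattern-avoiding stack machine\<close>

function sc_steps :: "('a list \<Rightarrow> bool) \<Rightarrow> 'a list \<Rightarrow> 'a list \<Rightarrow> 'a list \<Rightarrow> 'a list \<times> 'a list" where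
  "sc_steps ok [] st out = (st, out)"
| "sc_steps ok (x # xs) st out =
     (if ok (x # st) then sc_steps ok xs (x # st) out
      else (case st of [] \<Rightarrow> sc_steps ok xs [x] out
                     | y # ys \<Rightarrow> sc_steps ok (x # xs) ys (out @ [y])))"
  by pat_completeness auto
termination
  by (relation "measure (\<lambda>(_, inp, st, _). 2 * length inp + length st)") auto

lemma sc_steps_push: "ok (x # st) \<Longrightarrow> sc_steps ok (x # xs) st out = sc_steps ok xs (x # st) out"
  by simp

lemma sc_steps_pop:
  "\<not> ok (x # y # ys) \<Longrightarrow> sc_steps ok (x # xs) (y # ys) out = sc_steps ok (x # xs) ys (out @ [y])"
  by simp

declare sc_steps.simps(2) [simp del]

lemma sc_run_append:
  "sc_run ok (xs @ ys) st out = (case sc_steps ok xs st out of (st', out') \<Rightarrow> sc_run ok ys st' out')"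
  by (induction ok xs st out rule: sc_steps.induct) (auto simp: sc_steps.simps(2) split: list.split)

lemma sc_run_eq_sc_steps:
  "sc_run ok xs st out = (case sc_steps ok xs st out of (st', out') \<Rightarrow> out' @ st')"
  using sc_run_append[of ok xs "[]" st out] by (simp split: prod.split)

lemma sc_run_append_output: "sc_run ok xs st (out @ out') = out @ sc_run ok xs st out'"
  by (induction ok xs st out' rule: sc_run.induct) (auto split: list.split)

lemma sc_steps_output_prefix: "sc_steps ok xs st out = (st', out') \<Longrightarrow> \<exists>zs. out' = out @ zs"
proof (induction ok xs st out rule: sc_steps.induct)
  case (2 ok x xs st out)
  show ?case
  proof (cases "ok (x # st)")
    case False
    show ?thesis
    proof (cases st)
      case (Cons y ys)
      then show ?thesis
        using False "2.IH"(3)[OF False Cons] "2.prems" by (auto simp: sc_steps.simps(2))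
    qed (use False 2 in \<open>simp add: sc_steps.simps(2)\<close>)
  qed (use 2 in \<open>simp add: sc_steps.simps(2)\<close>)
qed simp

lemma mset_sc_run: "mset (sc_run ok xs st out) = mset xs + mset st + mset out"
  by (induction ok xs st out rule: sc_run.induct) (auto split: list.split)

lemma set_sc_steps:
  "sc_steps ok xs st out = (st', out') \<Longrightarrow> set st' \<union> set out' = set xs \<union> set st \<union> set out"
  using arg_cong[OF mset_sc_run[of ok xs st out], of set_mset] by (auto simp: sc_run_eq_sc_steps)

lemma set_sc_run: "set (sc_run ok xs [] []) = set xs"
  using arg_cong[OF mset_sc_run[of ok xs "[]" "[]"], of set_mset] by simp

lemma set_SC: "set (SC sigma A w) = set w"
  by (simp add: SC_def set_sc_run)

text \<open>A stack bottom \<open>B\<close> that never influences the test is never popped; \<open>I\<close> is an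
  invariant of the part above it.\<close>

lemma sc_run_append_stack:
  assumes ok_eq: "\<And>x S. x \<in> E \<Longrightarrow> set S \<subseteq> E \<Longrightarrow> I S \<Longrightarrow> okA (x # S @ B) = okB (x # S)"
    and I_push: "\<And>x S. x \<in> E \<Longrightarrow> set S \<subseteq> E \<Longrightarrow> I S \<Longrightarrow> okB (x # S) \<Longrightarrow> I (x # S)"
    and I_pop: "\<And>y S. I (y # S) \<Longrightarrow> I S"
    and ok_singleton: "\<And>x. x \<in> E \<Longrightarrow> okB [x]"
    and "set xs \<subseteq> E" "set st \<subseteq> E" "I st"
  shows "sc_run okA xs (st @ B) out = sc_run okB xs st out @ B"
proof -
  have "ok = okB \<Longrightarrow> set xs \<subseteq> E \<Longrightarrow> set st \<subseteq> E \<Longrightarrow> I st \<Longrightarrow>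
    sc_run okA xs (st @ B) out = sc_run ok xs st out @ B" for ok
  proof (induction ok xs st out rule: sc_run.induct)
    case (2 ok x xs st out)
    have okA: "okA (x # st @ B) = ok (x # st)"
      using ok_eq "2.prems" by simp
    show ?case
    proof (cases "ok (x # st)")
      case True
      then show ?thesis using okA "2.IH"(1) "2.prems" I_push by simp
    next
      case False
      show ?thesis
      proof (cases st)
        case Nil
        then show ?thesis using False ok_singleton "2.prems" by simp
      next
        case (Cons y ys)
        then show ?thesis using False okA "2.IH"(3) "2.prems" I_pop by simp
      qed
    qed
  qed simp
  then show ?thesis using assms(5-7) by blast
qed

lemma sc_run_flush:
  assumes "\<And>y S. y \<in> set st \<Longrightarrow> \<not> ok (m # y # S)"
  shows "sc_run ok (m # xs) st out = sc_run ok (m # xs) [] (out @ st)"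
  using assms by (induction st arbitrary: out) auto

text \<open>Pushing \<open>m\<close> empties the stack, after which \<open>m\<close> rests at its bottom untouched.\<close>

lemma sc_run_not_has_pair_split:
  assumes "\<forall>x\<in>set L \<union> set R. Q m x \<and> \<not> Q x m"
  shows "sc_run (\<lambda>S. \<not> has_pair Q S) (L @ m # R) [] [] =
    sc_run (\<lambda>S. \<not> has_pair Q S) L [] [] @ sc_run (\<lambda>S. \<not> has_pair Q S) R [] [] @ [m]"
proof -
  let ?ok = "\<lambda>S. \<not> has_pair Q S"
  obtain st out where L: "sc_steps ?ok L [] [] = (st, out)"
    by (cases "sc_steps ?ok L [] []")
  have st: "set st \<subseteq> set L"
    using set_sc_steps[OF L] by auto
  have "sc_run ?ok (L @ m # R) [] [] = sc_run ?ok (m # R) st out"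
    using sc_run_append[of ?ok L "m # R" "[]" "[]"] L by simp
  also have "\<dots> = sc_run ?ok (m # R) [] (out @ st)"
    by (rule sc_run_flush) (use assms st in auto)
  also have "\<dots> = sc_run ?ok R ([] @ [m]) (out @ st)"
    by simp
  also have "\<dots> = sc_run ?ok R [] (out @ st) @ [m]"
    by (rule sc_run_append_stack[where E = "{x. Q m x \<and> \<not> Q x m}" and I = ?ok])
      (use assms in \<open>auto simp: has_pair_append\<close>)
  also have "\<dots> = (out @ st) @ sc_run ?ok R [] [] @ [m]"
    using sc_run_append_output[of ?ok R "[]" "out @ st" "[]"] by simp
  finally show ?thesis
    using sc_run_eq_sc_steps[of ?ok L "[]" "[]"] L by simp
qed

section \<open>West's map and the 12-avoiding machine\<close>

lemma distinct_Max_induct [consumes 1, case_names Nil split]: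
  fixes w :: "'a::linorder list"
  assumes "distinct w" and "P []"
    and "\<And>L m R. distinct (L @ m # R) \<Longrightarrow> \<forall>x\<in>set L \<union> set R. x < m \<Longrightarrow>
      P L \<Longrightarrow> P R \<Longrightarrow> P (L @ m # R)"
  shows "P w"
  using assms(1)
proof (induction "length w" arbitrary: w rule: less_induct)
  case less
  show ?case
  proof (cases "w = []")
    case False
    define m where "m = Max (set w)"
    have "m \<in> set w"
      using False by (simp add: m_def)
    then obtain L R where w: "w = L @ m # R"
      by (meson split_list)
    have "\<forall>x\<in>set L \<union> set R. x < m"
    proof
      fix x
      assume "x \<in> set L \<union> set R"
      then have "x \<in> set w" "x \<noteq> m"
        using less.prems unfolding w by auto
      then show "x < m"
        unfolding m_def by (auto simp: less_le)
    qed
    moreover have "P L" "P R"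
      using less unfolding w by auto
    ultimately show ?thesis
      using assms(3) less.prems unfolding w by metis
  qed (use assms(2) in simp)
qed

lemma distinct_Min_induct [consumes 1, case_names Nil split]:
  fixes w :: "'a::linorder list"
  assumes "distinct w" and "P []"
    and "\<And>L m R. distinct (L @ m # R) \<Longrightarrow> \<forall>x\<in>set L \<union> set R. m < x \<Longrightarrow>
      P L \<Longrightarrow> P R \<Longrightarrow> P (L @ m # R)"
  shows "P w"
  using assms(1)
proof (induction "length w" arbitrary: w rule: less_induct)
  case less
  show ?case
  proof (cases "w = []")
    case False
    define m where "m = Min (set w)"
    have "m \<in> set w"
      using False by (simp add: m_def)
    then obtain L R where w: "w = L @ m # R"
      by (meson split_list)
    have "\<forall>x\<in>set L \<union> set R. m < x"
    proof
      fix x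
      assume "x \<in> set L \<union> set R"
      then have "x \<in> set w" "x \<noteq> m"
        using less.prems unfolding w by auto
      then show "m < x"
        unfolding m_def by (auto simp: less_le)
    qed
    moreover have "P L" "P R"
      using less unfolding w by auto
    ultimately show ?thesis
      using assms(3) less.prems unfolding w by metis
  qed (use assms(2) in simp)
qed

lemma set_west_s: "set (west_s w) = set w"
  by (simp add: west_s_def set_SC)

lemma west_s_split:
  assumes "\<forall>x\<in>set L \<union> set R. x < m"
  shows "west_s (L @ m # R) = west_s L @ west_s R @ [m]"
  unfolding west_s_def SC_def avoids_vinc_21
  by (rule sc_run_not_has_pair_split) (use assms in \<open>blast dest: less_asym\<close>)

lemma sorted_west_s_iff: "distinct w \<Longrightarrow> sorted (west_s w) \<longleftrightarrow> \<not> has_231 w"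
proof (induction w rule: distinct_Max_induct)
  case (split L m R)
  have "sorted (west_s (L @ m # R)) \<longleftrightarrow>
      sorted (west_s L) \<and> sorted (west_s R) \<and> (\<forall>x\<in>set L. \<forall>y\<in>set R. x \<le> y)"
    unfolding west_s_split[OF split(2)] using split(2)
    by (auto simp: set_west_s sorted_append less_imp_le)
  then show ?case
    using split(3,4) has_231_split_Max[OF split(2)] by (auto simp: not_less)
qed (simp add: west_s_def SC_def)

lemma SC_12_split:
  assumes "\<forall>x\<in>set L \<union> set R. m < x"
  shows "SC [1, 2] {} (L @ m # R) = SC [1, 2] {} L @ SC [1, 2] {} R @ [m]"
  unfolding SC_def avoids_vinc_12
  by (rule sc_run_not_has_pair_split) (use assms in \<open>blast dest: less_asym\<close>)

lemma has_pair_less_SC_12: "distinct w \<Longrightarrow> has_pair (<) (SC [1, 2] {} w) \<longleftrightarrow> has_213 w"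
proof (induction w rule: distinct_Min_induct)
  case (split L m R)
  then show ?case
    using has_213_split_Min[OF split(2)]
    unfolding SC_12_split[OF split(2)] using split(2)
    by (auto simp: has_pair_append set_SC dest: order.asym)
qed (simp add: SC_def)

lemma has_231_SC_12: "distinct w \<Longrightarrow> has_231 (SC [1, 2] {} w) \<longleftrightarrow> has_213 w"
proof (induction w rule: distinct_Min_induct)
  case (split L m R)
  let ?V = "SC [1, 2] {} L @ SC [1, 2] {} R"
  have m: "\<forall>x\<in>set ?V. m < x"
    using split(2) by (auto simp: set_SC)
  have "has_231 (SC [1, 2] {} (L @ m # R)) \<longleftrightarrow> has_pair (<) ?V"
    unfolding SC_12_split[OF split(2)] using has_231_snoc_Min[OF m] by simp
  also have "\<dots> \<longleftrightarrow> has_pair (<) (SC [1, 2] {} (L @ m # R))"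
    unfolding SC_12_split[OF split(2)] using m by (auto simp: has_pair_append dest: order.asym)
  finally show ?case
    using has_pair_less_SC_12[OF split(1)] by simp
qed (simp add: SC_def)

section \<open>The 12_3-avoiding machine\<close>

lemma sc_steps_12_3_push_all:
  assumes "\<not> has_12_3 st" and "sc_steps (\<lambda>S. \<not> has_12_3 S) xs st [] = (st', out)"
  shows "(out = [] \<longleftrightarrow> \<not> has_12_3 (rev xs @ st)) \<and> (out = [] \<longrightarrow> st' = rev xs @ st)"
  using assms
proof (induction xs arbitrary: st)
  case (Cons x xs)
  show ?case
  proof (cases "has_12_3 (x # st)")
    case False
    then show ?thesis
      using Cons.IH[OF False] Cons.prems(2) by (simp add: sc_steps_push)
  next
    case True
    then obtain y ys where st: "st = y # ys"
      by (cases st) auto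
    then have "sc_steps (\<lambda>S. \<not> has_12_3 S) (x # xs) ys [y] = (st', out)"
      using Cons.prems(2) True by (simp add: sc_steps_pop)
    then have "out \<noteq> []"
      using sc_steps_output_prefix by fastforce
    moreover have "has_12_3 (rev (x # xs) @ st)"
      using has_12_3_append_left[OF True, of "rev xs"] by simp
    ultimately show ?thesis by simp
  qed
qed simp

text \<open>Every popped entry exceeds the entry whose push caused the pop, which in turn stays in
  the stack or is popped by a smaller one.\<close>

lemma sc_steps_12_3_output_above_stack:
  assumes "sc_steps (\<lambda>S. \<not> has_12_3 S) xs st out = (st', out')" and "\<not> has_12_3 st"
    and "\<forall>c\<in>set out. \<exists>z\<in>set st \<union> set xs. z < c"
  shows "\<not> has_12_3 st' \<and> (\<forall>c\<in>set out'. \<exists>z\<in>set st'. z < c)"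
proof -
  have "ok = (\<lambda>S. \<not> has_12_3 S) \<Longrightarrow> sc_steps ok xs st out = (st', out') \<Longrightarrow> \<not> has_12_3 st \<Longrightarrow>
    \<forall>c\<in>set out. \<exists>z\<in>set st \<union> set xs. z < c \<Longrightarrow>
    \<not> has_12_3 st' \<and> (\<forall>c\<in>set out'. \<exists>z\<in>set st'. z < c)" for ok
  proof (induction ok xs st out rule: sc_steps.induct)
    case (2 ok x xs st out)
    show ?case
    proof (cases "has_12_3 (x # st)")
      case False
      then show ?thesis
        using "2.IH"(1) "2.prems" by (auto simp: sc_steps_push)
    next
      case True
      then obtain y ys where st: "st = y # ys"
        by (cases st) auto
      have "sc_steps ok (x # xs) ys (out @ [y]) = (st', out')"
        using "2.prems"(1,2) True st by (simp add: sc_steps_pop)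
      moreover have "\<not> has_12_3 ys"
        using "2.prems"(3) has_12_3_append_left[of ys "[y]"] st by auto
      moreover have "x < y"
        using True "2.prems"(3) st by (simp add: has_12_3_Cons_Cons)
      then have "\<forall>c\<in>set (out @ [y]). \<exists>z\<in>set ys \<union> set (x # xs). z < c"
        using "2.prems"(4) st by (auto dest: less_trans)
      ultimately show ?thesis
        using "2.IH"(3) "2.prems"(1) True st by auto
    qed
  qed simp
  then show ?thesis
    using assms by blast
qed

text \<open>Above the maximum \<open>n\<close>, any adjacent ascent of the stack forms a 12_3 together with
  \<open>n\<close>, so that part avoids 12_3 exactly when it is decreasing, i.e. avoids 12.\<close>

lemma sc_run_12_3_above_Max:
  assumes "\<forall>z\<in>set st. z < n" and "\<not> has_12_3 st" and "\<forall>z\<in>set xs. z < n"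
  shows "sc_run (\<lambda>S. \<not> has_12_3 S) xs (n # st) out =
    sc_run (\<lambda>S. \<not> has_pair (<) S) xs [] out @ n # st"
proof -
  let ?I = "\<lambda>U. \<not> has_pair (<) U \<and> \<not> has_12_3 (U @ n # st)"
  have n_st: "\<not> has_12_3 (n # st)"
    using assms(1,2) has_12_3_Cons_Max by blast
  have ok_eq: "has_12_3 (x # U @ n # st) \<longleftrightarrow> has_pair (<) (x # U)"
    if "x < n" "\<forall>u\<in>set U. u < n" "?I U" for x U
  proof (cases U)
    case Nil
    then show ?thesis
      using n_st assms(1) by (auto simp: has_12_3_Cons_Cons dest: order.asym)
  next
    case (Cons t U')
    have "\<forall>u\<in>set U'. \<not> t < u" "\<not> has_pair (<) U'" "\<not> has_12_3 (t # U' @ n # st)" "t < n"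
      using that Cons by auto
    then show ?thesis
      using Cons by (auto simp: has_12_3_Cons_Cons not_less dest: less_le_trans)
  qed
  have "sc_run (\<lambda>S. \<not> has_12_3 S) xs ([] @ n # st) out =
      sc_run (\<lambda>S. \<not> has_pair (<) S) xs [] out @ n # st"
  proof (rule sc_run_append_stack[where E = "{x. x < n}" and I = ?I])
    show "(\<not> has_12_3 (x # S @ n # st)) = (\<not> has_pair (<) (x # S))"
      if "x \<in> {x. x < n}" "set S \<subseteq> {x. x < n}" "?I S" for x S
      using that ok_eq[of x S] by auto
    show "?I (x # S)"
      if "x \<in> {x. x < n}" "set S \<subseteq> {x. x < n}" "?I S" "\<not> has_pair (<) (x # S)" for x S
      using that ok_eq[of x S] by auto
    show "?I S" if "?I (y # S)" for y S
      using that has_12_3_append_left[of "S @ n # st" "[y]"] by auto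
  qed (use assms n_st in auto)
  then show ?thesis by simp
qed

lemma SC_12_3_split:
  assumes bound: "\<forall>x\<in>set ta \<union> set tb. x < n"
    and steps: "sc_steps (\<lambda>S. \<not> has_12_3 S) ta [] [] = (st, out)"
  shows "SC [1, 2, 3] {0} (ta @ n # tb) = out @ SC [1, 2] {} tb @ n # st"
proof -
  have st: "\<not> has_12_3 st" "\<forall>z\<in>set st. z < n"
    using sc_steps_12_3_output_above_stack[OF steps] set_sc_steps[OF steps] bound by auto
  have "SC [1, 2, 3] {0} (ta @ n # tb) = sc_run (\<lambda>S. \<not> has_12_3 S) (n # tb) st out"
    unfolding SC_def avoids_vinc_12_3 using sc_run_append[of _ ta "n # tb" "[]" "[]"] steps by simp
  also have "\<dots> = sc_run (\<lambda>S. \<not> has_12_3 S) tb (n # st) out"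
    using st by (simp add: has_12_3_Cons_Max)
  also have "\<dots> = sc_run (\<lambda>S. \<not> has_pair (<) S) tb [] out @ n # st"
    by (rule sc_run_12_3_above_Max) (use st bound in auto)
  also have "\<dots> = out @ SC [1, 2] {} tb @ n # st"
    unfolding SC_def avoids_vinc_12 using sc_run_append_output[of _ tb "[]" out "[]"] by simp
  finally show ?thesis .
qed

lemma has_231_SC_12_3:
  assumes bound: "\<forall>x\<in>set ta \<union> set tb. x < n" and "distinct tb"
  shows "has_231 (SC [1, 2, 3] {0} (ta @ n # tb)) \<longleftrightarrow>
    has_3_21 ta \<or> has_132 ta \<or> has_213 tb \<or> (\<exists>a\<in>set ta. \<exists>b\<in>set tb. a < b)"
proof -
  obtain st out where steps: "sc_steps (\<lambda>S. \<not> has_12_3 S) ta [] [] = (st, out)"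
    by (cases "sc_steps (\<lambda>S. \<not> has_12_3 S) ta [] []")
  have X: "SC [1, 2, 3] {0} (ta @ n # tb) = (out @ SC [1, 2] {} tb) @ n # st"
    using SC_12_3_split[OF bound steps] by simp
  have bound_X: "\<forall>x\<in>set (out @ SC [1, 2] {} tb) \<union> set st. x < n"
    using set_sc_steps[OF steps] bound by (auto simp: set_SC)
  show ?thesis
  proof (cases "has_3_21 ta")
    case True
    then have "out \<noteq> []"
      using sc_steps_12_3_push_all[OF _ steps] by (simp add: has_12_3_rev)
    then obtain c where "c \<in> set out"
      using last_in_set by blast
    moreover have "\<forall>c\<in>set out. \<exists>z\<in>set st. z < c"
      using sc_steps_12_3_output_above_stack[OF steps] by simp
    ultimately obtain z where "z \<in> set st" "z < c"
      by blast
    then have "has_231 (SC [1, 2, 3] {0} (ta @ n # tb))"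
      unfolding X using has_231_split_Max[OF bound_X] \<open>c \<in> set out\<close> by auto
    with True show ?thesis by simp
  next
    case False
    then have "out = []" "st = rev ta"
      using sc_steps_12_3_push_all[OF _ steps] by (simp_all add: has_12_3_rev)
    then have "has_231 (SC [1, 2, 3] {0} (ta @ n # tb)) \<longleftrightarrow>
        has_231 (SC [1, 2] {} tb) \<or> has_231 (rev ta) \<or>
        (\<exists>x\<in>set (SC [1, 2] {} tb). \<exists>z\<in>set (rev ta). z < x)"
      using has_231_split_Max[OF bound_X] unfolding X by simp
    also have "\<dots> \<longleftrightarrow> has_213 tb \<or> has_132 ta \<or> (\<exists>a\<in>set ta. \<exists>b\<in>set tb. a < b)"
      using has_231_SC_12[OF assms(2)] by (auto simp: has_triple_rev set_SC)
    finally show ?thesis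
      using False by auto
  qed
qed

lemma Sort_iff_not_has_231:
  assumes "tau \<in> perms n"
  shows "tau \<in> Sort n sigma A \<longleftrightarrow> \<not> has_231 (SC sigma A tau)"
proof -
  let ?X = "SC sigma A tau"
  have X: "distinct ?X" "set ?X = {1..n}"
    using assms mset_sc_run[of _ tau "[]" "[]"]
    by (auto simp: perms_def SC_def dest: mset_eq_imp_distinct_iff mset_eq_setD)
  moreover have "mset (west_s ?X) = mset ?X"
    by (simp add: west_s_def SC_def mset_sc_run)
  ultimately have "distinct (west_s ?X)" "set (west_s ?X) = {1..n}"
    by (metis mset_eq_imp_distinct_iff, metis mset_eq_setD)
  then have "west_s ?X = [1..<n + 1] \<longleftrightarrow> sorted (west_s ?X)"
    by (metis atLeastLessThanSuc_atLeastAtMost distinct_upt set_upt sorted_distinct_set_unique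
        sorted_upt Suc_eq_plus1)
  then show ?thesis
    using assms sorted_west_s_iff[OF X(1)] by (simp add: Sort_def)
qed

theorem mainTheorem12:
  fixes n :: nat and tau ta tb :: "nat list"
  assumes "n \<ge> 1"
    and "tau \<in> perms n"
    and "tau = ta @ n # tb"
  shows "tau \<in> Sort n [1, 2, 3] {0} \<longleftrightarrow>
           ((\<forall>a\<in>set ta. \<forall>b\<in>set tb. b < a) \<and>
            avoids_vinc [3, 2, 1] {1} ta \<and> avoids_vinc [1, 3, 2] {} ta \<and>
            avoids_vinc [2, 1, 3] {} tb)"
proof -
  have tau: "distinct tau" "set tau = {1..n}"
    using assms(2) by (auto simp: perms_def)
  then have bound: "\<forall>x\<in>set ta \<union> set tb. x < n"
    using assms(3) by (fastforce simp: order.order_iff_strict)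
  have "distinct tb"
    using tau(1) assms(3) by simp
  have "tau \<in> Sort n [1, 2, 3] {0} \<longleftrightarrow> \<not> has_231 (SC [1, 2, 3] {0} (ta @ n # tb))"
    using Sort_iff_not_has_231[OF assms(2)] assms(3) by simp
  also have "\<dots> \<longleftrightarrow> \<not> (has_3_21 ta \<or> has_132 ta \<or> has_213 tb \<or> (\<exists>a\<in>set ta. \<exists>b\<in>set tb. a < b))"
    using has_231_SC_12_3[OF bound \<open>distinct tb\<close>] by simp
  also have "\<dots> \<longleftrightarrow> (\<forall>a\<in>set ta. \<forall>b\<in>set tb. b < a) \<and>
      avoids_vinc [3, 2, 1] {1} ta \<and> avoids_vinc [1, 3, 2] {} ta \<and> avoids_vinc [2, 1, 3] {} tb"
    unfolding avoids_vinc_3_21 avoids_vinc_132 avoids_vinc_213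
    using tau(1) assms(3) by (auto simp: not_less order.order_iff_strict)
  finally show ?thesis .
qed

end
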